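(* Assume Gompertzian growth, $\phi(x)=b\ln(X_\infty/x)$ with $b>0$ and $X_\infty>0$, and let $x(t)=X_0^{e^{-bt}}X_\infty^{1-e^{-bt}}$ be the untreated tumor trajectory starting from $x(0)=X_0>0$. Then for any doses $d_0,\dots,d_{N-1}\ge0$ and every $i=0,1,\dots,N-1$, $$Y_i^+=\frac{1}{\alpha_T}\ln\big(x(i)\big)-\sum_{k=0}^{i}e^{-b(i-k)}\,\mathrm{BED}_T(d_k).$$ Consequently, minimizing $Y_{N-1}^+$ subject to $\sum_{k=0}^{N-1}\mathrm{BED}_O(d_k)\le c$ is equivalent to maximizing $\sum_{k=0}^{N-1}e^{-b(N-1-k)}\mathrm{BED}_T(d_k)$ subject to the same constraint.
   Context: Tumor parameters $\alpha_T>0$, $\beta_T>0$, $[\alpha/\beta]_T=\alpha_T/\beta_T$; $\mathrm{BED}_T(d)=d\left(1+\frac{d}{[\alpha/\beta]_T}\right)$; OAR parameters $[\alpha/\beta]_O>0$, $0<\gamma<1$, $c>0$, and $\mathrm{BED}_O(d)=\gamma d\left(1+\frac{\gamma d}{[\alpha/\beta]_O}\right)$. Tumor growth between doses follows $\frac{1}{x}\frac{dx}{dt}=\phi(x)$. Doses are delivered at integer times $0,\dots,N-1$. With $Y=\ln(\text{number of tumor cells})/\alpha_T$, let $F$ be the one-day growth map for $Y$ under the ODE; $Y_0^-=\ln(X_0)/\alpha_T$, $Y_0^+=Y_0^--\mathrm{BED}_T(d_0)$, and $Y_{i+1}^+=F(Y_i^+)-\mathrm{BED}_T(d_{i+1})$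 for $i=0,\dots,N-2$. *)

theory Defs
  imports "HOL-Analysis.Analysis"
begin

definition BED_T :: "real \<Rightarrow> real \<Rightarrow> real" where
  "BED_T abT d = d * (1 + d / abT)"

definition BED_O :: "real \<Rightarrow> real \<Rightarrow> real \<Rightarrow> real" where
  "BED_O abO gam d = gam * d * (1 + gam * d / abO)"

definition gompertz_phi :: "real \<Rightarrow> real \<Rightarrow> real \<Rightarrow> real" where
  "gompertz_phi b Xinf x = b * ln (Xinf / x)"

definition is_one_day_map :: "(real \<Rightarrow> real) \<Rightarrow> real \<Rightarrow> (real \<Rightarrow> real) \<Rightarrow> bool" where
  "is_one_day_map phi alphaT F \<longleftrightarrow>
     (\<forall>Y. \<exists>z::real \<Rightarrow> real. z 0 = exp (alphaT * Y) \<and>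
        (\<forall>t\<in>{0..1}. z t > 0 \<and> (z has_real_derivative (z t * phi (z t))) (at t within {0..1})) \<and>
        F Y = ln (z 1) / alphaT)"

fun Yplus :: "(real \<Rightarrow> real) \<Rightarrow> real \<Rightarrow> real \<Rightarrow> real \<Rightarrow> (nat \<Rightarrow> real) \<Rightarrow> nat \<Rightarrow> real" where
  "Yplus F alphaT abT X0 d 0 = ln X0 / alphaT - BED_T abT (d 0)"
| "Yplus F alphaT abT X0 d (Suc i) = F (Yplus F alphaT abT X0 d i) - BED_T abT (d (Suc i))"

definition gompertz_traj :: "real \<Rightarrow> real \<Rightarrow> real \<Rightarrow> real \<Rightarrow> real" where
  "gompertz_traj b X0 Xinf t = X0 powr exp (- b * t) * Xinf powr (1 - exp (- b * t))"

definition feasible :: "nat \<Rightarrow> real \<Rightarrow> real \<Rightarrow> real \<Rightarrow> (nat \<Rightarrow> real) \<Rightarrow> bool" where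
  "feasible N abO gam c d \<longleftrightarrow> (\<forall>k<N. d k \<ge> 0) \<and> (\<Sum>k<N. BED_O abO gam (d k)) \<le> c"

end

theory Submission
  imports Defs
begin

text \<open>For Gompertzian growth the log-distance to the carrying capacity, \<open>ln x - ln Xinf\<close>,
  satisfies the linear equation \<open>u' = -b u\<close>, so it decays exactly like \<open>exp (- b t)\<close>.
  Hence the one-day map for \<open>Y\<close> is affine with slope \<open>exp (- b)\<close>, and unrolling the
  recursion for \<open>Y\<^sub>i\<^sup>+\<close> gives the untreated trajectory minus the doses discounted by
  \<open>exp (- b (i - k))\<close>. The first term does not depend on the doses, so minimising
  \<open>Y\<^sub>N\<^sub>-\<^sub>1\<^sup>+\<close> is maximising the discounted sum.\<close>

lemma gompertz_ln_decay:
  assumes "Xinf > 0" "t \<in> {0..T}"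
    and sol: "\<And>s. s \<in> {0..T} \<Longrightarrow> z s > 0 \<and>
      (z has_real_derivative (z s * gompertz_phi b Xinf (z s))) (at s within {0..T})"
  shows "ln (z t) - ln Xinf = exp (- b * t) * (ln (z 0) - ln Xinf)"
proof -
  define g where "g s = (ln (z s) - ln Xinf) * exp (b * s)" for s
  have "\<exists>c. \<forall>s\<in>{0..T}. g s = c"
  proof (rule has_field_derivative_zero_constant)
    fix s assume s: "s \<in> {0..T}"
    have zs: "z s > 0" and dz: "(z has_real_derivative (z s * gompertz_phi b Xinf (z s))) (at s within {0..T})"
      using sol[OF s] by auto
    have "(g has_real_derivative
        (z s * gompertz_phi b Xinf (z s)) / z s * exp (b * s) + (ln (z s) - ln Xinf) * (exp (b * s) * b))
        (at s within {0..T})"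
      unfolding g_def by (rule derivative_eq_intros DERIV_ln_divide dz zs refl | simp)+
    moreover have "(z s * gompertz_phi b Xinf (z s)) / z s * exp (b * s) + (ln (z s) - ln Xinf) * (exp (b * s) * b) = 0"
      using zs \<open>Xinf > 0\<close> by (simp add: gompertz_phi_def ln_div field_simps)
    ultimately show "(g has_real_derivative 0) (at s within {0..T})" by simp
  qed simp
  moreover have "0 \<in> {0..T}" using \<open>t \<in> {0..T}\<close> by simp
  ultimately have "g t = g 0" using \<open>t \<in> {0..T}\<close> by metis
  then show ?thesis by (simp add: g_def exp_minus field_simps)
qed

lemma gompertz_one_day_map_affine:
  assumes "alphaT > 0" "Xinf > 0"
    and "is_one_day_map (gompertz_phi b Xinf) alphaT F"
  shows "F Y = exp (- b) * Y + (1 - exp (- b)) * ln Xinf / alphaT"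
proof -
  obtain z where z0: "z 0 = exp (alphaT * Y)"
    and sol: "\<forall>t\<in>{0..1}. z t > 0 \<and>
      (z has_real_derivative (z t * gompertz_phi b Xinf (z t))) (at t within {0..1})"
    and FY: "F Y = ln (z 1) / alphaT"
    using assms(3) unfolding is_one_day_map_def by blast
  have "ln (z 1) - ln Xinf = exp (- b) * (alphaT * Y - ln Xinf)"
    using gompertz_ln_decay[of Xinf 1 1 z b] sol \<open>Xinf > 0\<close> by (simp add: z0)
  then show ?thesis using FY \<open>alphaT > 0\<close> by (simp add: field_simps)
qed

lemma ln_gompertz_traj:
  assumes "X0 > 0" "Xinf > 0"
  shows "ln (gompertz_traj b X0 Xinf t) = exp (- b * t) * ln X0 + (1 - exp (- b * t)) * ln Xinf"
  using assms by (simp add: gompertz_traj_def ln_mult ln_powr)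

lemma Yplus_affine_closed_form:
  assumes "alphaT > 0" "X0 > 0" "Xinf > 0"
    and F: "\<And>Y. F Y = exp (- b) * Y + (1 - exp (- b)) * ln Xinf / alphaT"
  shows "Yplus F alphaT abT X0 d i =
           ln (gompertz_traj b X0 Xinf (real i)) / alphaT
           - (\<Sum>k\<le>i. exp (- b * (real i - real k)) * BED_T abT (d k))"
proof (induction i)
  case 0
  then show ?case using ln_gompertz_traj[OF assms(2,3), of b 0] by simp
next
  case (Suc i)
  let ?E = "exp (- b)" and ?L = "ln Xinf"
  let ?S = "\<lambda>i. \<Sum>k\<le>i. exp (- b * (real i - real k)) * BED_T abT (d k)"
  have shift: "exp (- b * (real (Suc i) - x)) = ?E * exp (- b * (real i - x))" for x
    by (simp add: mult_exp_exp algebra_simps)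
  have step: "Yplus F alphaT abT X0 d (Suc i)
      = ?E * Yplus F alphaT abT X0 d i + (1 - ?E) * ?L / alphaT - BED_T abT (d (Suc i))"
    by (simp only: Yplus.simps F)
  have sum_step: "?S (Suc i) = ?E * ?S i + BED_T abT (d (Suc i))"
    unfolding sum.atMost_Suc shift by (simp add: sum_distrib_left mult.assoc exp_minus)
  have traj_step: "ln (gompertz_traj b X0 Xinf (real (Suc i)))
      = ?E * ln (gompertz_traj b X0 Xinf (real i)) + (1 - ?E) * ?L"
    using shift[of 0] by (simp add: ln_gompertz_traj assms(2,3) algebra_simps)
  show ?case
    unfolding step Suc.IH sum_step traj_step using \<open>alphaT > 0\<close> by (simp add: field_simps)
qed

theorem mainTheorem6:
  fixes alphaT betaT abT abO gam c b Xinf X0 :: real and N :: nat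
    and F :: "real \<Rightarrow> real"
  assumes "alphaT > 0" "betaT > 0" "abT = alphaT / betaT"
    and "abO > 0" "0 < gam" "gam < 1" "c > 0"
    and "N \<ge> 1" and "b > 0" "Xinf > 0" "X0 > 0"
    and "is_one_day_map (gompertz_phi b Xinf) alphaT F"
  shows "(\<forall>d::nat \<Rightarrow> real. (\<forall>k<N. d k \<ge> 0) \<longrightarrow> (\<forall>i<N.
            Yplus F alphaT abT X0 d i =
              ln (gompertz_traj b X0 Xinf (real i)) / alphaT
              - (\<Sum>k\<le>i. exp (- b * (real i - real k)) * BED_T abT (d k))))
       \<and> (\<forall>d::nat \<Rightarrow> real. feasible N abO gam c d \<longrightarrow>
            ((\<forall>d'. feasible N abO gam c d' \<longrightarrow>
                 Yplus F alphaT abT X0 d (N - 1) \<le> Yplus F alphaT abT X0 d' (N - 1))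
             \<longleftrightarrow>
             (\<forall>d'. feasible N abO gam c d' \<longrightarrow>
                 (\<Sum>k<N. exp (- b * (real (N - 1) - real k)) * BED_T abT (d' k))
                 \<le> (\<Sum>k<N. exp (- b * (real (N - 1) - real k)) * BED_T abT (d k)))))"
proof -
  note closed_form = Yplus_affine_closed_form[OF \<open>alphaT > 0\<close> \<open>X0 > 0\<close> \<open>Xinf > 0\<close>
      gompertz_one_day_map_affine[OF \<open>alphaT > 0\<close> \<open>Xinf > 0\<close> assms(12)]]
  have "{..N - 1} = {..<N}" using \<open>N \<ge> 1\<close> by auto
  then have "Yplus F alphaT abT X0 d (N - 1) = ln (gompertz_traj b X0 Xinf (real (N - 1))) / alphaT
      - (\<Sum>k<N. exp (- b * (real (N - 1) - real k)) * BED_T abT (d k))" for d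
    using closed_form[of abT d "N - 1"] by simp
  then show ?thesis using closed_form by auto
qed

end
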